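(* For $\gamma\in(0,1)$ and $\varphi(x)=x^{1-\gamma}$, \[ \alpha_\varphi=\frac{1}{e\,\Gamma(\gamma)}\int_0^1\frac{e^x}{(-\log x)^{1-\gamma}}\,dx. \]
   Context: $\alpha_\varphi=\inf_{x\in\mathbb{Z}_{\ge1}}\frac{\mathbb{E}_{X\sim\mathrm{Pois}(x)}[\varphi(X)]}{\varphi(x)}$; $\Gamma$ is the Gamma function and $\log$ is the natural logarithm. *)

theory Defs
  imports "HOL-Probability.Probability"
begin

definition alpha_phi :: "(nat \<Rightarrow> real) \<Rightarrow> real" where
  "alpha_phi \<phi> = (INF x\<in>{1::nat..}.
      measure_pmf.expectation (poisson_pmf (real x)) \<phi> / \<phi> x)"

end

theory Submission
  imports Defs
begin

text \<open>Keeping each of \<open>Pois(x)\<close> points independently with probability \<open>1/x\<close> leaves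
  \<open>Pois(1)\<close> points. As \<open>j \<mapsto> j^s\<close> is concave for \<open>s = 1 - \<gamma>\<close>, Jensen's inequality on each
  binomial fibre gives \<open>E[Pois(1)^s] \<le> x^(-s) E[Pois(x)^s]\<close>, so the infimum defining
  \<open>\<alpha>\<^sub>\<phi>\<close> is attained at \<open>x = 1\<close>, where it equals
  \<open>e^(-1) \<Sum>\<^sub>k k^s / k! = e^(-1) \<Sum>\<^sub>k 1 / (k! (k+1)^\<gamma>)\<close>. On the other side, the substitution
  \<open>x = e^(-t)\<close> and the power series of \<open>exp (e^(-t))\<close> turn the integral into
  \<open>\<Sum>\<^sub>k (1/k!) \<integral>\<^sub>0\<^sup>\<infinity> t^(\<gamma>-1) e^(-(k+1)t) dt = \<Gamma>(\<gamma>) \<Sum>\<^sub>k 1 / (k! (k+1)^\<gamma>)\<close>.\<close>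

lemma exp_sums_real: "(\<lambda>k. x ^ k / fact k) sums exp (x :: real)"
  using exp_converges[of x] by (simp add: divide_inverse mult.commute)

lemma nn_integral_measure_pmf_nat_sums:
  fixes M :: "nat pmf" and f :: "nat \<Rightarrow> real"
  assumes nonneg: "\<And>k. 0 \<le> f k" and S: "(\<lambda>k. pmf M k * f k) sums S"
  shows "(\<integral>\<^sup>+ k. f k \<partial>M) = ennreal S"
proof -
  have "(\<integral>\<^sup>+ k. f k \<partial>M) = (\<Sum>k. ennreal (pmf M k * f k))"
    by (simp add: nn_integral_measure_pmf nn_integral_count_space_nat ennreal_mult' nonneg)
  also have "\<dots> = ennreal S"
    using S nonneg by (subst suminf_ennreal2) (auto simp: sums_iff)
  finally show ?thesis .
qed

lemma expectation_measure_pmf_nat_sums: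
  fixes M :: "nat pmf" and f :: "nat \<Rightarrow> real"
  assumes nonneg: "\<And>k. 0 \<le> f k" and S: "(\<lambda>k. pmf M k * f k) sums S"
  shows "measure_pmf.expectation M f = S"
proof -
  have "0 \<le> S"
    using S nonneg by (intro sums_le[OF _ sums_zero S]) auto
  then show ?thesis
    using nn_integral_measure_pmf_nat_sums[OF assms] nonneg
    by (subst integral_eq_nn_integral) auto
qed

lemma summable_poisson_powr:
  fixes r s :: real
  assumes r: "0 < r" and s: "0 \<le> s" "s \<le> 1"
  shows "summable (\<lambda>k. pmf (poisson_pmf r) k * real k powr s)"
proof (rule summable_comparison_test')
  show "summable (\<lambda>k. exp (-r) * ((2 * r) ^ k / fact k))"
    using exp_sums_real by (intro summable_mult) (rule sums_summable)
  fix k :: nat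
  have "real k powr s \<le> 2 ^ k"
  proof (cases "k = 0")
    case False
    then have "real k powr s \<le> real k"
      using s powr_mono[of s 1 "real k"] by simp
    also have "\<dots> \<le> 2 ^ k"
      by (simp add: less_imp_le)
    finally show ?thesis .
  qed simp
  then show "norm (pmf (poisson_pmf r) k * real k powr s) \<le> exp (-r) * ((2 * r) ^ k / fact k)"
    using r by (simp add: field_simps mult_left_mono)
qed

lemma nn_integral_poisson_powr:
  fixes r s :: real
  assumes "0 < r" and "0 \<le> s" "s \<le> 1"
  shows "(\<integral>\<^sup>+ k. real k powr s \<partial>poisson_pmf r)
           = ennreal (measure_pmf.expectation (poisson_pmf r) (\<lambda>k. real k powr s))"
  using summable_poisson_powr[OF assms, THEN summable_sums]
  by (simp add: nn_integral_measure_pmf_nat_sums expectation_measure_pmf_nat_sums)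

lemma pmf_poisson_mult_pmf_binomial:
  fixes r p :: real and m j :: nat
  assumes "0 < r" "0 \<le> p" "p \<le> 1"
  shows "pmf (poisson_pmf r) (m + j) * pmf (binomial_pmf (m + j) p) j
           = exp (-r) * ((r * p) ^ j / fact j) * ((r * (1 - p)) ^ m / fact m)"
proof -
  have "fact j * fact m * real (m + j choose j) = fact (m + j)"
    using binomial_fact_lemma[of j "m + j"]
    by (metis add_diff_cancel_right' le_add2 of_nat_fact of_nat_mult)
  then have "real (m + j choose j) = fact (m + j) / (fact j * fact m)"
    by (simp add: field_simps)
  then show ?thesis
    using assms by (simp add: power_add power_mult_distrib)
qed

lemma bind_poisson_binomial_pmf:
  fixes r p :: real
  assumes r: "0 < r" and p: "0 < p" "p \<le> 1"
  shows "bind_pmf (poisson_pmf r) (\<lambda>k. binomial_pmf k p) = poisson_pmf (r * p)"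
proof (rule pmf_eqI)
  fix j :: nat
  define a where "a k = pmf (poisson_pmf r) k * pmf (binomial_pmf k p) j" for k
  have "(\<lambda>m. a (m + j)) sums (exp (-r) * ((r * p) ^ j / fact j) * exp (r * (1 - p)))"
    unfolding a_def pmf_poisson_mult_pmf_binomial[OF r less_imp_le[OF p(1)] p(2)]
    by (intro sums_mult exp_sums_real)
  also have "exp (-r) * ((r * p) ^ j / fact j) * exp (r * (1 - p)) = pmf (poisson_pmf (r * p)) j"
    using r p by (simp add: mult_exp_exp algebra_simps)
  finally have "a sums pmf (poisson_pmf (r * p)) j"
    using p by (subst (asm) sums_zero_iff_shift) (auto simp: a_def)
  then show "pmf (bind_pmf (poisson_pmf r) (\<lambda>k. binomial_pmf k p)) j = pmf (poisson_pmf (r * p)) j"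
    unfolding pmf_bind a_def by (rule expectation_measure_pmf_nat_sums[OF pmf_nonneg])
qed

lemma powr_le_tangent_line:
  fixes s m y :: real
  assumes s: "0 \<le> s" "s \<le> 1" and m: "0 < m" and y: "0 \<le> y"
  shows "y powr s \<le> m powr s * (s * y / m + (1 - s))"
proof (cases "y = 0")
  case False
  have "(y / m) powr s * 1 powr (1 - s) \<le> s * (y / m) + (1 - s) * 1"
    using s m y False by (intro Youngs_inequality_0) auto
  then show ?thesis
    using m y False by (simp add: powr_divide divide_simps mult_ac)
qed (use s m in simp)

lemma expectation_binomial_powr_le:
  fixes s p :: real
  assumes s: "0 \<le> s" "s \<le> 1" and p: "0 < p" "p \<le> 1"
  shows "measure_pmf.expectation (binomial_pmf n p) (\<lambda>j. real j powr s) \<le> (real n * p) powr s"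
proof (cases "n = 0")
  case False
  define m where "m = real n * p"
  have m: "0 < m" using False p by (simp add: m_def)
  have "measure_pmf.expectation (binomial_pmf n p) (\<lambda>j. real j powr s)
          = (\<Sum>j\<le>n. Bernstein n j p * real j powr s)"
    using p by (simp add: expectation_binomial_pmf' Bernstein_def mult_ac)
  also have "\<dots> \<le> (\<Sum>j\<le>n. Bernstein n j p * (m powr s * (s * real j / m + (1 - s))))"
    using s m p by (intro sum_mono mult_left_mono powr_le_tangent_line Bernstein_nonneg) auto
  also have "\<dots> = (\<Sum>j\<le>n. m powr s * s / m * (real j * Bernstein n j p)
                         + m powr s * (1 - s) * Bernstein n j p)"
    by (intro sum.cong) (simp_all add: algebra_simps)
  also have "\<dots> = m powr s * s / m * (\<Sum>j\<le>n. real j * Bernstein n j p)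
                   + m powr s * (1 - s) * (\<Sum>j\<le>n. Bernstein n j p)"
    by (simp only: sum.distrib sum_distrib_left)
  also have "\<dots> = m powr s"
    using m by (simp add: m_def field_simps)
  finally show ?thesis by (simp add: m_def)
qed (use p in \<open>simp add: binomial_pmf_0\<close>)

lemma expectation_poisson_powr_thinning_le:
  fixes r p s :: real
  assumes r: "0 < r" and p: "0 < p" "p \<le> 1" and s: "0 \<le> s" "s \<le> 1"
  shows "measure_pmf.expectation (poisson_pmf (r * p)) (\<lambda>k. real k powr s)
           \<le> p powr s * measure_pmf.expectation (poisson_pmf r) (\<lambda>k. real k powr s)"
proof -
  have rp: "0 < r * p" using r p by simp
  have "ennreal (measure_pmf.expectation (poisson_pmf (r * p)) (\<lambda>k. real k powr s))
          = (\<integral>\<^sup>+ j. real j powr s \<partial>bind_pmf (poisson_pmf r) (\<lambda>k. binomial_pmf k p))"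
    by (simp only: nn_integral_poisson_powr[OF rp s] bind_poisson_binomial_pmf[OF r p])
  also have "\<dots> = (\<integral>\<^sup>+ k. (\<integral>\<^sup>+ j. real j powr s \<partial>binomial_pmf k p) \<partial>poisson_pmf r)"
    by simp
  also have "\<dots> \<le> (\<integral>\<^sup>+ k. ennreal (p powr s) * ennreal (real k powr s) \<partial>poisson_pmf r)"
  proof (intro nn_integral_mono)
    fix k :: nat
    have "(\<integral>\<^sup>+ j. real j powr s \<partial>binomial_pmf k p)
            = ennreal (measure_pmf.expectation (binomial_pmf k p) (\<lambda>j. real j powr s))"
      using p by (intro nn_integral_eq_integral) auto
    also have "\<dots> \<le> ennreal (p powr s * real k powr s)"
      using expectation_binomial_powr_le[OF s p] by (simp add: ennreal_leI powr_mult mult.commute)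
    finally show "(\<integral>\<^sup>+ j. real j powr s \<partial>binomial_pmf k p) \<le> ennreal (p powr s) * ennreal (real k powr s)"
      by (simp add: ennreal_mult)
  qed
  also have "\<dots> = ennreal (p powr s * measure_pmf.expectation (poisson_pmf r) (\<lambda>k. real k powr s))"
    by (simp add: nn_integral_cmult nn_integral_poisson_powr[OF r s] ennreal_mult)
  finally show ?thesis
    by (rule ennreal_le_iff[THEN iffD1, rotated]) (simp add: integral_nonneg_AE)
qed

lemma alpha_phi_powr:
  fixes s :: real
  assumes s: "0 \<le> s" "s \<le> 1"
  shows "alpha_phi (\<lambda>k. real k powr s) = measure_pmf.expectation (poisson_pmf 1) (\<lambda>k. real k powr s)"
proof -
  have lower_bound: "measure_pmf.expectation (poisson_pmf 1) (\<lambda>k. real k powr s)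
          \<le> measure_pmf.expectation (poisson_pmf (real x)) (\<lambda>k. real k powr s) / real x powr s"
    if "1 \<le> x" for x :: nat
  proof -
    have x: "0 < real x"
      using that by simp
    have "measure_pmf.expectation (poisson_pmf (real x * (1 / real x))) (\<lambda>k. real k powr s)
            \<le> (1 / real x) powr s * measure_pmf.expectation (poisson_pmf (real x)) (\<lambda>k. real k powr s)"
      using x that s by (intro expectation_poisson_powr_thinning_le) auto
    then show ?thesis
      using x by (simp add: powr_divide)
  qed
  show ?thesis
    unfolding alpha_phi_def
    by (rule cInf_eq_minimum) (auto intro: lower_bound rev_image_eqI[of 1])
qed

lemma summable_inverse_fact_mult_powr:
  fixes g :: real
  assumes "0 \<le> g"
  shows "summable (\<lambda>k. 1 / (fact k * real (Suc k) powr g))"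
proof (rule summable_comparison_test')
  show "summable (\<lambda>k. 1 ^ k / fact k :: real)"
    using exp_sums_real by (rule sums_summable)
  fix k :: nat
  have "1 \<le> real (Suc k) powr g"
    using assms by (intro ge_one_powr_ge_zero) auto
  then show "norm (1 / (fact k * real (Suc k) powr g)) \<le> 1 ^ k / fact k"
    by (simp add: divide_simps)
qed

lemma powr_div_fact_sums:
  fixes g :: real
  assumes "0 \<le> g"
  shows "(\<lambda>k. real k powr (1 - g) / fact k) sums (\<Sum>k. 1 / (fact k * real (Suc k) powr g))"
proof -
  have "real (Suc k) powr (1 - g) / fact (Suc k) = 1 / (fact k * real (Suc k) powr g)" for k
    by (simp add: powr_diff field_simps del: of_nat_Suc)
  then have "(\<lambda>k. real (Suc k) powr (1 - g) / fact (Suc k)) sums (\<Sum>k. 1 / (fact k * real (Suc k) powr g))"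
    using summable_inverse_fact_mult_powr[OF assms] by (simp add: summable_sums)
  then show ?thesis
    \<comment> \<open>the term \<open>k = 0\<close> drops out because \<open>0 powr a = 0\<close>\<close>
    by (subst (asm) sums_Suc_iff) simp
qed

lemma expectation_poisson_1_powr:
  fixes g :: real
  assumes "0 \<le> g"
  shows "measure_pmf.expectation (poisson_pmf 1) (\<lambda>k. real k powr (1 - g))
           = exp (-1) * (\<Sum>k. 1 / (fact k * real (Suc k) powr g))"
  using sums_mult[OF powr_div_fact_sums[OF assms], of "exp (-1)"]
  by (intro expectation_measure_pmf_nat_sums) (simp_all add: mult_ac)

lemma nn_integral_Gamma_scaled:
  fixes g c :: real
  assumes g: "0 < g" and c: "0 < c"
  shows "(\<integral>\<^sup>+ t. ennreal (indicator {0<..} t * t powr (g - 1) * exp (- (c * t))) \<partial>lborel)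
           = ennreal (Gamma g / c powr g)"
proof -
  define G where "G t = indicator {0<..} t * t powr (g - 1) * exp (- (c * t))" for t :: real
  have G_measurable [measurable]: "G \<in> borel_measurable borel"
    unfolding G_def by measurable
  have stretch: "indicator {0..} (c * t) * (c * t) powr (g - 1) / exp (c * t) = c powr (g - 1) * G t"
    for t
  proof (cases "0 < t")
    case True
    then show ?thesis
      using c by (simp add: G_def powr_mult exp_minus divide_inverse mult_ac)
  qed (use c in \<open>auto simp: G_def indicator_def zero_le_mult_iff\<close>)
  have "ennreal (Gamma g) = (\<integral>\<^sup>+ t. ennreal (indicator {0..} t * t powr (g - 1) / exp t) \<partial>lborel)"
    by (rule Gamma_conv_nn_integral_real[OF g])
  also have "\<dots> = ennreal c * (\<integral>\<^sup>+ t. ennreal (c powr (g - 1) * G t) \<partial>lborel)"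
    using nn_integral_real_affine[of "\<lambda>t. ennreal (indicator {0..} t * t powr (g - 1) / exp t)" c 0] c
    by (simp add: stretch)
  also have "\<dots> = ennreal (c powr g) * (\<integral>\<^sup>+ t. G t \<partial>lborel)"
  proof -
    have "c * c powr (g - 1) = c powr g"
      using c by (simp add: powr_mult_base)
    then show ?thesis
      using c by (simp add: ennreal_mult' nn_integral_cmult mult.assoc[symmetric] flip: ennreal_mult)
  qed
  finally have "ennreal (1 / c powr g) * ennreal (Gamma g)
                  = ennreal (1 / c powr g) * ennreal (c powr g) * (\<integral>\<^sup>+ t. G t \<partial>lborel)"
    by (simp add: mult.assoc)
  also have "ennreal (1 / c powr g) * ennreal (c powr g) = 1"
    using c by (simp flip: ennreal_mult)
  finally show ?thesis
    using c Gamma_real_pos[OF g] by (simp add: G_def divide_inverse mult.commute flip: ennreal_mult)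
qed

lemma nn_integral_powr_exp_exp_neg:
  fixes g :: real
  assumes g: "0 < g"
  shows "(\<integral>\<^sup>+ t. ennreal (indicator {0<..} t * t powr (g - 1) * exp (exp (-t) - t)) \<partial>lborel)
           = ennreal (Gamma g * (\<Sum>k. 1 / (fact k * real (Suc k) powr g)))"
proof -
  define H where "H k t = indicator {0<..} t * t powr (g - 1) * exp (- (real (Suc k) * t))"
    for k :: nat and t :: real
  define G where "G k t = H k t / fact k" for k t
  have G_nonneg: "0 \<le> G k t" for k t
    by (simp add: G_def H_def)
  have expand: "(\<lambda>k. G k t) sums (indicator {0<..} t * t powr (g - 1) * exp (exp (-t) - t))" for t
  proof -
    define C where "C = indicator {0<..} t * t powr (g - 1) * exp (-t)"
    have "exp (- (real (Suc k) * t)) = exp (-t) ^ k * exp (-t)" for k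
      by (simp add: algebra_simps flip: exp_of_nat_mult exp_add)
    then have G_eq: "(\<lambda>k. G k t) = (\<lambda>k. exp (-t) ^ k / fact k * C)"
      by (simp add: G_def H_def C_def fun_eq_iff)
    have "exp (exp (-t)) * C = indicator {0<..} t * t powr (g - 1) * exp (exp (-t) - t)"
      by (simp add: C_def exp_diff exp_minus divide_inverse)
    then show ?thesis
      unfolding G_eq by (metis sums_mult2 exp_sums_real)
  qed
  have "(\<integral>\<^sup>+ t. ennreal (indicator {0<..} t * t powr (g - 1) * exp (exp (-t) - t)) \<partial>lborel)
          = (\<integral>\<^sup>+ t. (\<Sum>k. ennreal (G k t)) \<partial>lborel)"
    using expand G_nonneg by (simp add: suminf_ennreal2 sums_iff)
  also have "\<dots> = (\<Sum>k. \<integral>\<^sup>+ t. ennreal (G k t) \<partial>lborel)"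
    by (rule nn_integral_suminf) (simp add: G_def H_def)
  also have "\<dots> = (\<Sum>k. ennreal (Gamma g * (1 / (fact k * real (Suc k) powr g))))"
  proof (rule suminf_cong)
    fix k
    have "(\<integral>\<^sup>+ t. ennreal (G k t) \<partial>lborel)
            = (\<integral>\<^sup>+ t. ennreal (inverse (fact k)) * ennreal (H k t) \<partial>lborel)"
      by (simp add: G_def ennreal_mult' divide_inverse mult.commute)
    also have "\<dots> = ennreal (inverse (fact k)) * ennreal (Gamma g / real (Suc k) powr g)"
      by (simp add: nn_integral_cmult H_def nn_integral_Gamma_scaled g)
    also have "\<dots> = ennreal (Gamma g * (1 / (fact k * real (Suc k) powr g)))"
      using Gamma_real_pos[OF g] by (simp add: field_simps flip: ennreal_mult)
    finally show "(\<integral>\<^sup>+ t. ennreal (G k t) \<partial>lborel)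
                    = ennreal (Gamma g * (1 / (fact k * real (Suc k) powr g)))" .
  qed
  also have "\<dots> = ennreal (\<Sum>k. Gamma g * (1 / (fact k * real (Suc k) powr g)))"
    using g Gamma_real_pos[OF g]
    by (intro suminf_ennreal2 summable_mult summable_inverse_fact_mult_powr) auto
  also have "\<dots> = ennreal (Gamma g * (\<Sum>k. 1 / (fact k * real (Suc k) powr g)))"
    using g by (simp only: suminf_mult summable_inverse_fact_mult_powr less_imp_le)
  finally show ?thesis .
qed

lemma interval_integral_exp_div_neg_ln_powr:
  fixes g :: real
  assumes g: "0 < g"
  shows "(LBINT x=0..1. exp x / (- ln x) powr (1 - g))
           = Gamma g * (\<Sum>k. 1 / (fact k * real (Suc k) powr g))"
    (is "_ = ?S")
proof -
  define f where "f = (\<lambda>x::real. exp x / (- ln x) powr (1 - g))"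
  have reflected: "indicator {0<..} t * (f (exp (-t)) * exp (-t))
                     = indicator {0<..} t * t powr (g - 1) * exp (exp (-t) - t)" for t :: real
  proof (cases "0 < t")
    case True
    have "t powr (g - 1) = inverse (t powr (1 - g))"
      using powr_minus[of t "1 - g"] by simp
    moreover have "exp (exp (-t) - t) = exp (exp (-t)) * exp (-t)"
      by (simp flip: exp_add)
    ultimately show ?thesis
      using True by (simp add: f_def divide_inverse mult_ac)
  qed simp
  have S_nonneg: "0 \<le> ?S"
    using g Gamma_real_pos[OF g]
    by (intro mult_nonneg_nonneg suminf_nonneg summable_inverse_fact_mult_powr) auto
  have "has_bochner_integral lborel (\<lambda>t. indicator {0<..} t * (f (exp (-t)) * exp (-t))) ?S"
    unfolding reflected
    using S_nonneg nn_integral_powr_exp_exp_neg[OF g] by (intro has_bochner_integral_nn_integral) auto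
  then have integrable: "set_integrable lborel {0<..} (\<lambda>t. f (exp (-t)) * exp (-t))"
    and integral: "(LBINT t:{0<..}. f (exp (-t)) * exp (-t)) = ?S"
    by (simp_all add: has_bochner_integral_iff set_integrable_def set_lebesgue_integral_def)
  have "interval_lebesgue_integrable lborel 0 \<infinity> (\<lambda>t. f (exp (-t)) * exp (-t))"
    using integrable by (simp add: interval_lebesgue_integral_0_infty)
  then have substituted_integrable: "set_integrable lborel (einterval (-\<infinity>) 0) (\<lambda>t. f (exp t) * exp t)"
    using interval_integrable_mirror[of 0 \<infinity> "\<lambda>t. f (exp t) * exp t"]
    by (simp add: interval_lebesgue_integrable_def)
  have continuous: "isCont (\<lambda>x. exp x / (- ln x) powr (1 - g)) (exp t)" if "t < 0" for t
    using that by (intro continuous_intros) auto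
  have "(LBINT x=0..1. f x) = (LBINT t=-\<infinity>..0. f (exp t) * exp t)"
    by (rule interval_integral_substitution_nonneg(2)[where f = f and g = exp and g' = exp,
                                                        OF _ _ _ _ _ _ _ _ substituted_integrable])
       (auto simp: f_def zero_ereal_def one_ereal_def ereal_tendsto_simps
             intro!: continuous tendsto_eq_intros exp_at_bot)
  also have "\<dots> = (LBINT t=0..\<infinity>. f (exp (-t)) * exp (-t))"
    by (subst interval_integral_reflect) simp
  also have "\<dots> = ?S"
    using integral by (simp add: interval_lebesgue_integral_0_infty)
  finally show ?thesis
    by (simp add: f_def)
qed

theorem mainTheorem12:
  fixes \<gamma> :: real
  assumes "0 < \<gamma>" and "\<gamma> < 1"
  shows "alpha_phi (\<lambda>k. real k powr (1 - \<gamma>)) =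
    1 / (exp 1 * Gamma \<gamma>) * (LBINT x=0..1. exp x / (- ln x) powr (1 - \<gamma>))"
proof -
  have Gamma_nonzero: "Gamma \<gamma> \<noteq> 0"
    using Gamma_real_pos[OF assms(1)] by linarith
  have "alpha_phi (\<lambda>k. real k powr (1 - \<gamma>))
          = exp (-1) * (\<Sum>k. 1 / (fact k * real (Suc k) powr \<gamma>))"
    using assms by (simp add: alpha_phi_powr expectation_poisson_1_powr)
  also have "\<dots> = 1 / (exp 1 * Gamma \<gamma>) * (Gamma \<gamma> * (\<Sum>k. 1 / (fact k * real (Suc k) powr \<gamma>)))"
    using Gamma_nonzero by (simp add: exp_minus divide_inverse mult.commute)
  also have "\<dots> = 1 / (exp 1 * Gamma \<gamma>) * (LBINT x=0..1. exp x / (- ln x) powr (1 - \<gamma>))"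
    using assms(1) by (simp only: interval_integral_exp_div_neg_ln_powr)
  finally show ?thesis .
qed

end
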